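(* Let $G$ be a connected graph. If every optimal vector coloring of $G$ is locally injective, then $G$ is a core; likewise, if every optimal strict vector coloring of $G$ is locally injective, then $G$ is a core. In particular, if $G$ is uniquely vector colorable and its unique optimal vector coloring is locally injective, then $G$ is a core.
   Context: A vector $t$-coloring of $G$ ($t\ge2$) assigns unit vectors $p_i\in\mathbb{R}^d$ to vertices with $\langle p_i,p_j\rangle\le-1/(t-1)$ for all edges $ij$; it is strict if equality holds on all edges. $\chi_v(G)$ (resp. $\chi_{sv}(G)$) is the least $t\ge2$ admitting a (resp. strict) vector $t$-coloring; an optimal (strict) vector coloring is a (strict) vector $\chi_v(G)$- (resp. $\chi_{sv}(G)$-) coloring. $G$ is uniquely vector colorable if any two optimal vector colorings have the same Gram matrix. A vector coloring is locally injective if no two distinct vertices having a common neighbor are assigned the same vector. A graph homomorphism $G\to H$ is an adjacency-preserving map $V(G)\to V(H)$; $G$ is a core if every homomorphism $G\to G$ is an automorphism (equivalently, $G$ has no homomorphism to a proper subgraph). *)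

theory Defs
  imports Complex_Main
begin

text \<open>Graphs: finite vertex set V and a symmetric irreflexive edge relation E on V.
Vectors in R^d are real lists of length d (the dimension d is arbitrary).\<close>

definition simple_graph :: "'a set \<Rightarrow> ('a \<Rightarrow> 'a \<Rightarrow> bool) \<Rightarrow> bool" where
  "simple_graph V E \<longleftrightarrow> finite V \<and> (\<forall>u v. E u v \<longrightarrow> u \<in> V \<and> v \<in> V)
     \<and> (\<forall>u v. E u v \<longrightarrow> E v u) \<and> (\<forall>v. \<not> E v v)"

definition connected_graph :: "'a set \<Rightarrow> ('a \<Rightarrow> 'a \<Rightarrow> bool) \<Rightarrow> bool" where
  "connected_graph V E \<longleftrightarrow> V \<noteq> {} \<and> (\<forall>u\<in>V. \<forall>v\<in>V. E\<^sup>*\<^sup>* u v)"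

definition vinner :: "real list \<Rightarrow> real list \<Rightarrow> real" where
  "vinner x y = (\<Sum>i<length x. x ! i * y ! i)"

definition vec_coloring :: "'a set \<Rightarrow> ('a \<Rightarrow> 'a \<Rightarrow> bool) \<Rightarrow> real \<Rightarrow> nat \<Rightarrow> ('a \<Rightarrow> real list) \<Rightarrow> bool" where
  "vec_coloring V E t d p \<longleftrightarrow> t \<ge> 2
     \<and> (\<forall>v\<in>V. length (p v) = d \<and> vinner (p v) (p v) = 1)
     \<and> (\<forall>u\<in>V. \<forall>v\<in>V. E u v \<longrightarrow> vinner (p u) (p v) \<le> - 1 / (t - 1))"

definition strict_vec_coloring :: "'a set \<Rightarrow> ('a \<Rightarrow> 'a \<Rightarrow> bool) \<Rightarrow> real \<Rightarrow> nat \<Rightarrow> ('a \<Rightarrow> real list) \<Rightarrow> bool" where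
  "strict_vec_coloring V E t d p \<longleftrightarrow> t \<ge> 2
     \<and> (\<forall>v\<in>V. length (p v) = d \<and> vinner (p v) (p v) = 1)
     \<and> (\<forall>u\<in>V. \<forall>v\<in>V. E u v \<longrightarrow> vinner (p u) (p v) = - 1 / (t - 1))"

definition chi_v :: "'a set \<Rightarrow> ('a \<Rightarrow> 'a \<Rightarrow> bool) \<Rightarrow> real" where
  "chi_v V E = (LEAST t. t \<ge> 2 \<and> (\<exists>d p. vec_coloring V E t d p))"

definition chi_sv :: "'a set \<Rightarrow> ('a \<Rightarrow> 'a \<Rightarrow> bool) \<Rightarrow> real" where
  "chi_sv V E = (LEAST t. t \<ge> 2 \<and> (\<exists>d p. strict_vec_coloring V E t d p))"

definition optimal_vec_coloring :: "'a set \<Rightarrow> ('a \<Rightarrow> 'a \<Rightarrow> bool) \<Rightarrow> nat \<Rightarrow> ('a \<Rightarrow> real list) \<Rightarrow> bool" where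
  "optimal_vec_coloring V E d p \<longleftrightarrow> vec_coloring V E (chi_v V E) d p"

definition optimal_strict_vec_coloring :: "'a set \<Rightarrow> ('a \<Rightarrow> 'a \<Rightarrow> bool) \<Rightarrow> nat \<Rightarrow> ('a \<Rightarrow> real list) \<Rightarrow> bool" where
  "optimal_strict_vec_coloring V E d p \<longleftrightarrow> strict_vec_coloring V E (chi_sv V E) d p"

definition uniquely_vec_colorable :: "'a set \<Rightarrow> ('a \<Rightarrow> 'a \<Rightarrow> bool) \<Rightarrow> bool" where
  "uniquely_vec_colorable V E \<longleftrightarrow>
     (\<forall>d p d' q. optimal_vec_coloring V E d p \<longrightarrow> optimal_vec_coloring V E d' q \<longrightarrow>
        (\<forall>u\<in>V. \<forall>v\<in>V. vinner (p u) (p v) = vinner (q u) (q v)))"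

definition locally_injective :: "'a set \<Rightarrow> ('a \<Rightarrow> 'a \<Rightarrow> bool) \<Rightarrow> ('a \<Rightarrow> real list) \<Rightarrow> bool" where
  "locally_injective V E p \<longleftrightarrow>
     (\<forall>u\<in>V. \<forall>v\<in>V. u \<noteq> v \<and> (\<exists>w\<in>V. E w u \<and> E w v) \<longrightarrow> p u \<noteq> p v)"

definition graph_hom :: "'a set \<Rightarrow> ('a \<Rightarrow> 'a \<Rightarrow> bool) \<Rightarrow> 'b set \<Rightarrow> ('b \<Rightarrow> 'b \<Rightarrow> bool) \<Rightarrow> ('a \<Rightarrow> 'b) \<Rightarrow> bool" where
  "graph_hom V E V' E' f \<longleftrightarrow> (\<forall>v\<in>V. f v \<in> V') \<and> (\<forall>u\<in>V. \<forall>v\<in>V. E u v \<longrightarrow> E' (f u) (f v))"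

definition graph_aut :: "'a set \<Rightarrow> ('a \<Rightarrow> 'a \<Rightarrow> bool) \<Rightarrow> ('a \<Rightarrow> 'a) \<Rightarrow> bool" where
  "graph_aut V E f \<longleftrightarrow> bij_betw f V V \<and> (\<forall>u\<in>V. \<forall>v\<in>V. E u v \<longleftrightarrow> E (f u) (f v))"

definition is_core :: "'a set \<Rightarrow> ('a \<Rightarrow> 'a \<Rightarrow> bool) \<Rightarrow> bool" where
  "is_core V E \<longleftrightarrow> (\<forall>f. graph_hom V E V E f \<longrightarrow> graph_aut V E f)"

end

theory Submission
  imports Defs "HOL-Analysis.Elementary_Metric_Spaces"
begin

text \<open>If p is an optimal (strict) vector coloring and f an endomorphism of G, then \<open>p \<circ> f\<close> is
  again one. If \<open>p \<circ> f\<close> is locally injective, so is f, and a suitable power of f is an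
  idempotent locally injective endomorphism, which on a connected graph is the identity. Hence f
  is an automorphism. If G is uniquely vector colorable, \<open>p \<circ> f\<close> has the Gram matrix of p, so
  f identifies two vertices only where p does.

  The remaining work is to show that optimal colorings exist, since \<open>\<chi>\<^sub>v\<close> is the least element
  of a set of reals. A Householder reflection shows that every vector coloring can be realized in
  dimension |V|, and by compactness of the unit sphere the thresholds achievable in that dimension
  form a closed set, which therefore contains its infimum.\<close>

section \<open>Locally injective endomorphisms\<close>

definition locally_injective_map :: "'a set \<Rightarrow> ('a \<Rightarrow> 'a \<Rightarrow> bool) \<Rightarrow> ('a \<Rightarrow> 'b) \<Rightarrow> bool" where
  "locally_injective_map V E f \<longleftrightarrow>
     (\<forall>w\<in>V. \<forall>u\<in>V. \<forall>v\<in>V. E w u \<longrightarrow> E w v \<longrightarrow> u \<noteq> v \<longrightarrow> f u \<noteq> f v)"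

lemma locally_injective_iff_map: "locally_injective V E p \<longleftrightarrow> locally_injective_map V E p"
  unfolding locally_injective_def locally_injective_map_def by blast

lemma locally_injective_map_compD:
  "locally_injective_map V E (g \<circ> f) \<Longrightarrow> locally_injective_map V E f"
  unfolding locally_injective_map_def comp_def by metis

lemma locally_injective_map_comp:
  assumes "graph_hom V E V' E' f" "locally_injective_map V E f" "locally_injective_map V' E' g"
  shows "locally_injective_map V E (g \<circ> f)"
  using assms unfolding locally_injective_map_def graph_hom_def by simp metis

lemma graph_hom_funpow: "graph_hom V E V E f \<Longrightarrow> graph_hom V E V E (f ^^ n)"
  by (induction n) (auto simp: graph_hom_def)

lemma locally_injective_map_funpow:
  assumes "graph_hom V E V E f" "locally_injective_map V E f"
  shows "locally_injective_map V E (f ^^ n)"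
proof (induction n)
  case 0
  show ?case by (simp add: locally_injective_map_def)
next
  case (Suc n)
  then show ?case
    using locally_injective_map_comp[OF graph_hom_funpow[OF assms(1)] Suc assms(2)]
    by (simp only: funpow.simps(2))
qed

lemma funpow_repeats_on_finite:
  assumes "finite V" "\<forall>v\<in>V. f v \<in> V"
  obtains a b where "a < b" "\<forall>v\<in>V. (f ^^ a) v = (f ^^ b) v"
proof -
  have into: "(f ^^ k) v \<in> V" if "v \<in> V" for k v
    using that by (induction k) (auto simp: assms(2))
  define F where "F k = restrict (f ^^ k) V" for k
  have "range F \<subseteq> Pi\<^sub>E V (\<lambda>_. V)"
    unfolding F_def using into by auto
  then have "finite (range F)"
    using finite_PiE[OF assms(1), of "\<lambda>_. V"] assms(1) finite_subset by blast
  then have "\<not> inj F"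
    using finite_imageD infinite_UNIV_nat by blast
  then obtain a b where "F a = F b" "a \<noteq> b"
    unfolding inj_def by blast
  then obtain a b where ab: "F a = F b" "a < b"
    by (metis linorder_neqE_nat)
  have "\<forall>v\<in>V. (f ^^ a) v = (f ^^ b) v"
    using ab(1) unfolding F_def by (metis restrict_apply')
  with ab(2) show thesis
    by (rule that)
qed

lemma funpow_idempotent_on_finite:
  assumes "finite V" "\<forall>v\<in>V. f v \<in> V"
  obtains n where "n \<ge> 1" "\<forall>v\<in>V. (f ^^ n) ((f ^^ n) v) = (f ^^ n) v"
proof -
  obtain a b where ab: "a < b" "\<forall>v\<in>V. (f ^^ a) v = (f ^^ b) v"
    using funpow_repeats_on_finite[OF assms] .
  define p where "p = b - a"
  have periodic: "(f ^^ (m + q * p)) v = (f ^^ m) v" if "a \<le> m" "v \<in> V" for m q v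
  proof (induction q)
    case (Suc q)
    have "m + Suc q * p = (m - a + q * p) + b"
      using that ab(1) by (simp add: p_def)
    then have "(f ^^ (m + Suc q * p)) v = (f ^^ (m - a + q * p)) ((f ^^ b) v)"
      by (simp only: funpow_add[of "m - a + q * p" b] comp_apply)
    also have "\<dots> = (f ^^ (m - a + q * p + a)) v"
      using ab(2) that(2) by (simp only: funpow_add[of "m - a + q * p" a] comp_apply)
    also have "\<dots> = (f ^^ (m + q * p)) v"
      using that(1) by (simp add: algebra_simps)
    finally show ?case using Suc by simp
  qed simp
  define n where "n = (a + 1) * p"
  have "1 \<le> p"
    using ab(1) by (simp add: p_def)
  then have "a + 1 \<le> n"
    unfolding n_def by (metis mult.right_neutral mult_le_mono2)
  then have "\<forall>v\<in>V. (f ^^ n) ((f ^^ n) v) = (f ^^ n) v"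
    using periodic[of n _ "a + 1"] by (simp add: n_def funpow_add)
  moreover have "1 \<le> n"
    using \<open>a + 1 \<le> n\<close> by simp
  ultimately show thesis by (rule that[rotated])
qed

lemma rtranclp_crossing_edge:
  assumes "E\<^sup>*\<^sup>* a b" "a \<in> F" "b \<notin> F"
  obtains y z where "E y z" "y \<in> F" "z \<notin> F"
  using assms by (induction rule: rtranclp_induct) auto

text \<open>The fixed points of g contain an edge yz leaving them; then g z is a second neighbour
  of y = g y, distinct from z, with the same image g (g z) = g z.\<close>
lemma idempotent_locally_injective_hom_is_id:
  assumes sg: "simple_graph V E" and cg: "connected_graph V E"
    and hom: "graph_hom V E V E g" and li: "locally_injective_map V E g"
    and idem: "\<forall>v\<in>V. g (g v) = g v"
  shows "\<forall>v\<in>V. g v = v"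
proof (rule ccontr)
  assume "\<not> (\<forall>v\<in>V. g v = v)"
  then obtain x where x: "x \<in> V" "g x \<noteq> x" by blast
  define F where "F = {v\<in>V. g v = v}"
  have gx: "g x \<in> V" "g x \<in> F" "x \<notin> F"
    using hom idem x unfolding graph_hom_def F_def by auto
  then have "E\<^sup>*\<^sup>* (g x) x"
    using cg x unfolding connected_graph_def by blast
  then obtain y z where yz: "E y z" "y \<in> F" "z \<notin> F"
    using gx rtranclp_crossing_edge by metis
  have "y \<in> V" "z \<in> V"
    using sg yz(1) unfolding simple_graph_def by blast+
  with hom yz have "g z \<in> V" "E y (g z)" "g z \<noteq> z"
    unfolding graph_hom_def F_def by auto
  with li yz \<open>y \<in> V\<close> \<open>z \<in> V\<close> have "g (g z) \<noteq> g z"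
    unfolding locally_injective_map_def by metis
  with idem \<open>z \<in> V\<close> show False by simp
qed

lemma graph_aut_if_funpow_id:
  assumes fin: "finite V" and hom: "graph_hom V E V E f"
    and period: "\<forall>v\<in>V. (f ^^ Suc m) v = v"
  shows "graph_aut V E f"
proof -
  have inverse: "(f ^^ m) (f v) = v" if "v \<in> V" for v
    using period that by (simp add: funpow_Suc_right del: funpow.simps)
  have into: "f ` V \<subseteq> V"
    using hom unfolding graph_hom_def by blast
  have "inj_on f V"
    by (metis inverse inj_onI)
  with into have "bij_betw f V V"
    unfolding bij_betw_def using endo_inj_surj[OF fin] by blast
  moreover have "E u v \<longleftrightarrow> E (f u) (f v)" if "u \<in> V" "v \<in> V" for u v
  proof
    assume "E u v"
    then show "E (f u) (f v)"
      using hom that unfolding graph_hom_def by blast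
  next
    assume "E (f u) (f v)"
    moreover have "f u \<in> V" "f v \<in> V"
      using into that by auto
    ultimately have "E ((f ^^ m) (f u)) ((f ^^ m) (f v))"
      using graph_hom_funpow[OF hom, of m] unfolding graph_hom_def by blast
    then show "E u v"
      using inverse that by simp
  qed
  ultimately show ?thesis
    unfolding graph_aut_def by blast
qed

lemma locally_injective_hom_is_aut:
  assumes sg: "simple_graph V E" and cg: "connected_graph V E"
    and hom: "graph_hom V E V E f" and li: "locally_injective_map V E f"
  shows "graph_aut V E f"
proof -
  have fin: "finite V"
    using sg unfolding simple_graph_def by blast
  have "\<forall>v\<in>V. f v \<in> V"
    using hom unfolding graph_hom_def by blast
  then obtain n where n: "n \<ge> 1" "\<forall>v\<in>V. (f ^^ n) ((f ^^ n) v) = (f ^^ n) v"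
    using funpow_idempotent_on_finite[OF fin] by metis
  then obtain m where m: "n = Suc m"
    using not0_implies_Suc by fastforce
  have "\<forall>v\<in>V. (f ^^ n) v = v"
    using idempotent_locally_injective_hom_is_id[OF sg cg graph_hom_funpow[OF hom]
        locally_injective_map_funpow[OF hom li] n(2)] .
  then show ?thesis
    using graph_aut_if_funpow_id[OF fin hom, of m] unfolding m by blast
qed

lemma is_core_if_homs_locally_injective:
  assumes "simple_graph V E" "connected_graph V E"
    and "\<And>f. graph_hom V E V E f \<Longrightarrow> locally_injective_map V E f"
  shows "is_core V E"
  unfolding is_core_def using assms locally_injective_hom_is_aut by blast

section \<open>Vector colorings in coordinates\<close>

definition coord_inner :: "nat \<Rightarrow> (nat \<Rightarrow> real) \<Rightarrow> (nat \<Rightarrow> real) \<Rightarrow> real" where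
  "coord_inner d f g = (\<Sum>i<d. f i * g i)"

text \<open>Vectors of \<open>\<real>\<^sup>d\<close> are coordinate functions, of which only the first d values matter.\<close>
definition coord_vec_coloring ::
    "bool \<Rightarrow> 'a set \<Rightarrow> ('a \<Rightarrow> 'a \<Rightarrow> bool) \<Rightarrow> real \<Rightarrow> nat \<Rightarrow> ('a \<Rightarrow> nat \<Rightarrow> real) \<Rightarrow> bool" where
  "coord_vec_coloring strict V E t d x \<longleftrightarrow> t \<ge> 2
     \<and> (\<forall>v\<in>V. coord_inner d (x v) (x v) = 1)
     \<and> (\<forall>u\<in>V. \<forall>v\<in>V. E u v \<longrightarrow>
          (if strict then coord_inner d (x u) (x v) = - 1 / (t - 1)
           else coord_inner d (x u) (x v) \<le> - 1 / (t - 1)))"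

lemma coord_inner_commute: "coord_inner d f g = coord_inner d g f"
  unfolding coord_inner_def by (simp add: mult.commute)

lemma coord_inner_nonneg: "coord_inner d f f \<ge> 0"
  unfolding coord_inner_def by (simp add: sum_nonneg)

lemma coord_inner_self_eq_0_iff: "coord_inner d f f = 0 \<longleftrightarrow> (\<forall>i<d. f i = 0)"
  unfolding coord_inner_def by (subst sum_nonneg_eq_0_iff) auto

lemma coord_inner_diff_scaled:
  "coord_inner d (\<lambda>i. f i - a * u i) (\<lambda>i. g i - b * u i) =
     coord_inner d f g - b * coord_inner d f u - a * coord_inner d u g + a * b * coord_inner d u u"
proof -
  have "coord_inner d (\<lambda>i. f i - a * u i) (\<lambda>i. g i - b * u i) =
      (\<Sum>i<d. f i * g i - b * (f i * u i) - a * (u i * g i) + a * b * (u i * u i))"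
    unfolding coord_inner_def by (rule sum.cong) (simp_all add: algebra_simps)
  also have "\<dots> = (\<Sum>i<d. f i * g i) - (\<Sum>i<d. b * (f i * u i)) - (\<Sum>i<d. a * (u i * g i))
      + (\<Sum>i<d. a * b * (u i * u i))"
    by (simp add: sum.distrib sum_subtractf)
  finally show ?thesis
    by (simp add: coord_inner_def sum_distrib_left)
qed

lemma coord_inner_axis: "l < d \<Longrightarrow> coord_inner d f (\<lambda>i. if i = l then c else 0) = f l * c"
  unfolding coord_inner_def by (simp add: if_distrib cong: if_cong)

lemma coord_vec_coloring_cong_inner:
  assumes "coord_vec_coloring strict V E t d x"
    and "\<forall>u\<in>V. \<forall>v\<in>V. coord_inner d' (y u) (y v) = coord_inner d (x u) (x v)"
  shows "coord_vec_coloring strict V E t d' y"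
  using assms unfolding coord_vec_coloring_def by auto

lemma underdetermined_system_nontrivial_solution:
  fixes x :: "'k \<Rightarrow> nat \<Rightarrow> real"
  assumes "finite K" "finite I" "card K < card I"
  shows "\<exists>w. (\<forall>i. i \<notin> I \<longrightarrow> w i = 0) \<and> (\<exists>i\<in>I. w i \<noteq> 0) \<and> (\<forall>k\<in>K. (\<Sum>i\<in>I. w i * x k i) = 0)"
  using assms
proof (induction K arbitrary: I x rule: finite_induct)
  case empty
  then obtain j where "j \<in> I" by fastforce
  then show ?case by (intro exI[of _ "\<lambda>i. if i = j then 1 else 0"]) auto
next
  case (insert k K)
  show ?case
  proof (cases "\<exists>j\<in>I. x k j \<noteq> 0")
    case False
    then show ?thesis
      using insert.IH[of I x] insert.prems insert.hyps by auto
  next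
    case True
    then obtain j where j: "j \<in> I" "x k j \<noteq> 0" by blast
    text \<open>Eliminate the unknown j using equation k.\<close>
    define x' where "x' m i = x m i - x m j / x k j * x k i" for m i
    have "card K < card (I - {j})"
      using insert.prems insert.hyps j by simp
    then obtain w' where w': "\<forall>i. i \<notin> I - {j} \<longrightarrow> w' i = 0" "\<exists>i\<in>I - {j}. w' i \<noteq> 0"
       "\<forall>m\<in>K. (\<Sum>i\<in>I - {j}. w' i * x' m i) = 0"
      using insert.IH[of "I - {j}" x'] insert.prems by auto
    define S where "S = (\<Sum>i\<in>I - {j}. w' i * x k i)"
    define w where "w = w'(j := - S / x k j)"
    have split: "(\<Sum>i\<in>I. w i * y i) = - S / x k j * y j + (\<Sum>i\<in>I - {j}. w' i * y i)" for y
    proof -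
      have "(\<Sum>i\<in>I. w i * y i) = w j * y j + (\<Sum>i\<in>I - {j}. w i * y i)"
        using sum.remove[OF insert.prems(1) j(1)] by blast
      also have "(\<Sum>i\<in>I - {j}. w i * y i) = (\<Sum>i\<in>I - {j}. w' i * y i)"
        by (intro sum.cong) (auto simp: w_def)
      finally show ?thesis by (simp add: w_def)
    qed
    have "(\<Sum>i\<in>I. w i * x m i) = 0" if "m \<in> K" for m
    proof -
      have "0 = (\<Sum>i\<in>I - {j}. w' i * x' m i)" using w' that by simp
      also have "\<dots> = (\<Sum>i\<in>I - {j}. w' i * x m i) - x m j / x k j * S"
        unfolding x'_def S_def by (simp add: algebra_simps sum_subtractf sum_distrib_left)
      finally show ?thesis unfolding split using j by (simp add: field_simps)
    qed
    moreover have "(\<Sum>i\<in>I. w i * x k i) = 0"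
      unfolding split S_def using j by (simp add: field_simps)
    moreover have "\<forall>i. i \<notin> I \<longrightarrow> w i = 0" "\<exists>i\<in>I. w i \<noteq> 0"
      using w' j unfolding w_def by auto
    ultimately show ?thesis by (intro exI[of _ w]) auto
  qed
qed

definition reflect :: "nat \<Rightarrow> (nat \<Rightarrow> real) \<Rightarrow> (nat \<Rightarrow> real) \<Rightarrow> nat \<Rightarrow> real" where
  "reflect d u f i = f i - 2 * coord_inner d f u / coord_inner d u u * u i"

text \<open>For \<open>u = 0\<close> on the first d coordinates, division by zero makes the reflection the identity.\<close>
lemma coord_inner_reflect: "coord_inner d (reflect d u f) (reflect d u g) = coord_inner d f g"
proof -
  have "coord_inner d (reflect d u f) (reflect d u g) = coord_inner d f g
      - 2 * coord_inner d g u / coord_inner d u u * coord_inner d f u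
      - 2 * coord_inner d f u / coord_inner d u u * coord_inner d u g
      + 2 * coord_inner d f u / coord_inner d u u * (2 * coord_inner d g u / coord_inner d u u)
          * coord_inner d u u"
    unfolding reflect_def by (rule coord_inner_diff_scaled)
  moreover have "coord_inner d u g = coord_inner d g u"
    by (rule coord_inner_commute)
  ultimately show ?thesis
    by (cases "coord_inner d u u = 0") (simp_all add: field_simps)
qed

text \<open>The reflection in the hyperplane orthogonal to \<open>w - \<parallel>w\<parallel> e\<^sub>l\<close> maps w to \<open>\<parallel>w\<parallel> e\<^sub>l\<close>, hence
  the orthogonal complement of w into that of \<open>e\<^sub>l\<close>.\<close>
lemma reflect_orthogonal_coord_eq_0:
  assumes "l < d" "\<exists>i<d. w i \<noteq> 0" "coord_inner d f w = 0"
  defines "u \<equiv> \<lambda>i. w i - (if i = l then sqrt (coord_inner d w w) else 0)"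
  shows "reflect d u f l = 0"
proof -
  define r where "r = sqrt (coord_inner d w w)"
  have "coord_inner d w w \<noteq> 0"
    using assms(2) coord_inner_self_eq_0_iff by blast
  then have r: "r > 0" "r * r = coord_inner d w w"
    using coord_inner_nonneg[of d w] unfolding r_def by auto
  have inner_u: "coord_inner d g u = coord_inner d g w - r * g l" for g
  proof -
    have "coord_inner d g u = coord_inner d g w - coord_inner d g (\<lambda>i. if i = l then r else 0)"
      unfolding coord_inner_def u_def r_def by (simp add: algebra_simps sum_subtractf)
    then show ?thesis
      using assms(1) by (simp add: coord_inner_axis)
  qed
  have ul: "u l = - (r - w l)"
    by (simp add: u_def r_def)
  have "coord_inner d u u = coord_inner d w u - r * u l"
    using inner_u[of u] coord_inner_commute[of d u w] by simp
  also have "\<dots> = (r * r - r * w l) + r * (r - w l)"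
    unfolding inner_u[of w] ul r(2) by (simp add: algebra_simps)
  finally have uu: "coord_inner d u u = 2 * r * (r - w l)"
    by (simp add: algebra_simps)
  show ?thesis
  proof (cases "coord_inner d u u = 0")
    case True
    then have "\<forall>i<d. u i = 0"
      using coord_inner_self_eq_0_iff by blast
    then have "coord_inner d f u = 0"
      by (simp add: coord_inner_def)
    then have "f l = 0"
      using inner_u[of f] assms(3) r(1) by simp
    with True show ?thesis
      by (simp add: reflect_def)
  next
    case False
    then have "r - w l \<noteq> 0"
      using uu by auto
    have "coord_inner d f u = - (r * f l)"
      using inner_u[of f] assms(3) by simp
    then have "reflect d u f l = f l - 2 * (- (r * f l)) / (2 * r * (r - w l)) * (- (r - w l))"
      unfolding reflect_def uu ul by simp
    with \<open>r - w l \<noteq> 0\<close> r(1) show ?thesis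
      by (simp add: field_simps)
  qed
qed

lemma coord_dim_reduction_step:
  fixes x :: "'a \<Rightarrow> nat \<Rightarrow> real"
  assumes fin: "finite V" and dim: "card V < d"
  obtains y where "\<forall>u\<in>V. \<forall>v\<in>V. coord_inner (d - 1) (y u) (y v) = coord_inner d (x u) (x v)"
proof -
  obtain w where w: "\<forall>i. i \<notin> {..<d} \<longrightarrow> w i = 0" "\<exists>i\<in>{..<d}. w i \<noteq> 0"
      "\<forall>v\<in>V. (\<Sum>i\<in>{..<d}. w i * x v i) = 0"
    using underdetermined_system_nontrivial_solution[OF fin, of "{..<d}" x] dim by auto
  define l where "l = d - 1"
  have d: "d = Suc l" "l < d"
    using dim by (auto simp: l_def)
  define u where "u i = w i - (if i = l then sqrt (coord_inner d w w) else 0)" for i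
  define y where "y v = reflect d u (x v)" for v
  have "coord_inner d (x v) w = 0" if "v \<in> V" for v
    using w(3) that by (simp add: coord_inner_def mult.commute)
  then have last_0: "y v l = 0" if "v \<in> V" for v
    using reflect_orthogonal_coord_eq_0[OF d(2)] w(2) that by (auto simp: y_def u_def[abs_def])
  have "coord_inner l (y v) (y v') = coord_inner d (x v) (x v')" if "v \<in> V" "v' \<in> V" for v v'
  proof -
    have "coord_inner l (y v) (y v') = coord_inner d (y v) (y v')"
      using last_0 that by (simp add: coord_inner_def d(1))
    then show ?thesis
      by (simp add: y_def coord_inner_reflect)
  qed
  then show thesis
    using that unfolding l_def by blast
qed

lemma coord_dim_reduction:
  fixes x :: "'a \<Rightarrow> nat \<Rightarrow> real"
  assumes "finite V"
  obtains y where "\<forall>u\<in>V. \<forall>v\<in>V. coord_inner (card V) (y u) (y v) = coord_inner d (x u) (x v)"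
proof (induction d arbitrary: x thesis rule: less_induct)
  case (less d)
  show ?case
  proof (cases "d \<le> card V")
    case True
    define y where "y v i = (if i < d then x v i else 0)" for v i
    have "coord_inner (card V) (y u) (y v) = coord_inner d (x u) (x v)" for u v
    proof -
      have "coord_inner (card V) (y u) (y v) = (\<Sum>i<d. y u i * y v i)"
        unfolding coord_inner_def
        by (rule sum.mono_neutral_right) (use True in \<open>auto simp: y_def\<close>)
      then show ?thesis
        by (simp add: coord_inner_def y_def)
    qed
    then show ?thesis
      using less.prems by blast
  next
    case False
    then obtain y where y: "\<forall>u\<in>V. \<forall>v\<in>V. coord_inner (d - 1) (y u) (y v) = coord_inner d (x u) (x v)"
      using coord_dim_reduction_step[OF assms, of d x] by auto
    from False obtain z
      where "\<forall>u\<in>V. \<forall>v\<in>V. coord_inner (card V) (z u) (z v) = coord_inner (d - 1) (y u) (y v)"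
      using less.IH[of "d - 1" y] by auto
    with y show ?thesis
      using less.prems by auto
  qed
qed

lemma coord_vec_coloring_card_dim:
  assumes "finite V" "coord_vec_coloring strict V E t d x"
  obtains y where "coord_vec_coloring strict V E t (card V) y"
  using coord_dim_reduction[OF assms(1), of d x] coord_vec_coloring_cong_inner[OF assms(2)] by metis

section \<open>Existence of optimal vector colorings\<close>

lemma sum_centered_indicators:
  assumes "a < N" "b < N"
  shows "(\<Sum>i<N. ((if i = a then 1 else 0) - c) * ((if i = b then 1 else 0) - (c::real)))
    = (if a = b then 1 else 0) - 2 * c + real N * c * c"
proof -
  have "(\<Sum>i<N. ((if i = a then 1 else 0) - c) * ((if i = b then 1 else 0) - c))
     = (\<Sum>i<N. (if i = a then (if a = b then 1 else 0) else 0) - (c * (if i = b then 1 else 0))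
          - (c * (if i = a then 1 else 0)) + c * c)"
    by (intro sum.cong refl) (auto simp: algebra_simps)
  also have "\<dots> = (if a = b then 1 else 0) - 2 * c + real N * c * c"
    using assms by (simp add: sum.distrib sum_subtractf sum_distrib_left[symmetric])
  finally show ?thesis .
qed

text \<open>The vertices of a regular simplex with \<open>N > |V|\<close> vertices, one for each vertex of the graph.\<close>
lemma simplex_coord_vec_coloring:
  assumes fin: "finite V" and irrefl: "\<forall>v. \<not> E v v"
  defines "N \<equiv> card V + 2"
  shows "\<exists>x. coord_vec_coloring True V E (real N) N x"
proof -
  obtain h where h: "bij_betw h V {0..<card V}"
    using ex_bij_betw_finite_nat[OF fin] by blast
  have hN: "h v < N" if "v \<in> V" for v
    using h that bij_betwE unfolding N_def by fastforce
  have h_inj: "h u \<noteq> h v" if "u \<in> V" "v \<in> V" "u \<noteq> v" for u v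
    using h that bij_betw_imp_inj_on inj_onD by metis
  have N2: "real N \<ge> 2"
    by (simp add: N_def)
  define a where "a = sqrt (real N / (real N - 1))"
  have a2: "a * a = real N / (real N - 1)"
    unfolding a_def using N2 by simp
  define x where "x v i = a * ((if i = h v then 1 else 0) - 1 / real N)" for v i
  have inner: "coord_inner N (x u) (x v) = a * a * ((if h u = h v then 1 else 0) - 1 / real N)"
    if "u \<in> V" "v \<in> V" for u v
  proof -
    have "coord_inner N (x u) (x v) = a * a * (\<Sum>i<N. ((if i = h u then 1 else 0) - 1 / real N) *
              ((if i = h v then 1 else 0) - 1 / real N))"
      unfolding coord_inner_def x_def sum_distrib_left by (intro sum.cong refl) (simp add: algebra_simps)
    also have "\<dots> = a * a * ((if h u = h v then 1 else 0) - 2 / real N + real N * (1 / real N) * (1 / real N))"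
      using sum_centered_indicators[OF hN[OF that(1)] hN[OF that(2)]] by simp
    finally show ?thesis
      using N2 by (simp add: field_simps)
  qed
  have "coord_inner N (x v) (x v) = 1" if "v \<in> V" for v
  proof -
    have "coord_inner N (x v) (x v) = real N / (real N - 1) * (1 - 1 / real N)"
      using inner[OF that that] unfolding a2 by simp
    then show ?thesis
      using N2 by (simp add: field_simps)
  qed
  moreover have "coord_inner N (x u) (x v) = - 1 / (real N - 1)" if "u \<in> V" "v \<in> V" "E u v" for u v
  proof -
    have "u \<noteq> v"
      using irrefl that(3) by blast
    then have "coord_inner N (x u) (x v) = real N / (real N - 1) * (- 1 / real N)"
      using inner[OF that(1,2)] h_inj[OF that(1,2)] unfolding a2 by simp
    then show ?thesis
      using N2 by (simp add: field_simps)
  qed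
  ultimately show ?thesis
    using N2 unfolding coord_vec_coloring_def by auto
qed

lemma finite_bounded_convergent_subseq:
  fixes f :: "nat \<Rightarrow> 'j \<Rightarrow> real"
  assumes "finite J" "\<forall>j\<in>J. \<forall>k. \<bar>f k j\<bar> \<le> B"
  obtains r where "strict_mono r" "\<forall>j\<in>J. convergent (\<lambda>k. f (r k) j)"
  using assms
proof (induction J arbitrary: thesis rule: finite_induct)
  case empty
  then show ?case
    using strict_mono_id by blast
next
  case (insert j J)
  obtain r where r: "strict_mono r" "\<forall>j\<in>J. convergent (\<lambda>k. f (r k) j)"
    using insert by auto
  obtain s where s: "strict_mono s" "monoseq (\<lambda>n. f (r (s n)) j)"
    using seq_monosub[of "\<lambda>n. f (r n) j"] by auto
  have "Bseq (\<lambda>n. f (r (s n)) j)"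
    using insert.prems by (intro BseqI'[of _ B]) auto
  with s have "convergent (\<lambda>n. f (r (s n)) j)"
    using Bseq_monoseq_convergent by blast
  moreover have "convergent (\<lambda>k. f (r (s k)) i)" if "i \<in> J" for i
    using convergent_subseq_convergent[OF r(2)[rule_format, OF that] s(1)] by (simp add: o_def)
  moreover have "strict_mono (\<lambda>k. r (s k))"
    using strict_mono_o[OF r(1) s(1)] by (simp add: o_def)
  ultimately show ?case
    using insert.prems(1) by auto
qed

lemma coord_vec_coloring_coord_bound:
  assumes "coord_vec_coloring strict V E t d x" "v \<in> V" "i < d"
  shows "\<bar>x v i\<bar> \<le> 1"
proof -
  have "x v i * x v i \<le> coord_inner d (x v) (x v)"
    unfolding coord_inner_def using assms(3) by (intro member_le_sum) auto
  also have "\<dots> = 1"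
    using assms(1,2) unfolding coord_vec_coloring_def by auto
  finally have "(x v i)\<^sup>2 \<le> 1"
    by (simp add: power2_eq_square)
  then show ?thesis
    using abs_square_le_1 by blast
qed

lemma coord_vec_coloring_limit:
  assumes xx: "\<And>k. coord_vec_coloring strict V E (tt k) d (xx k)" and t_lim: "tt \<longlonglongrightarrow> T"
    and x_lim: "\<And>v i. v \<in> V \<Longrightarrow> i < d \<Longrightarrow> (\<lambda>k. xx k v i) \<longlonglongrightarrow> y v i"
  shows "coord_vec_coloring strict V E T d y"
proof -
  have inner_lim: "(\<lambda>k. coord_inner d (xx k u) (xx k v)) \<longlonglongrightarrow> coord_inner d (y u) (y v)"
    if "u \<in> V" "v \<in> V" for u v
    unfolding coord_inner_def using that x_lim by (intro tendsto_sum tendsto_mult) auto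
  have T2: "T \<ge> 2"
    using xx unfolding coord_vec_coloring_def by (intro LIMSEQ_le_const[OF t_lim]) auto
  then have bound_lim: "(\<lambda>k. - 1 / (tt k - 1)) \<longlonglongrightarrow> - 1 / (T - 1)"
    by (intro tendsto_intros t_lim) auto
  have "coord_inner d (y v) (y v) = 1" if "v \<in> V" for v
  proof -
    have "(\<lambda>k. coord_inner d (xx k v) (xx k v)) = (\<lambda>k. 1)"
      using xx that unfolding coord_vec_coloring_def by auto
    then have "(\<lambda>k. 1) \<longlonglongrightarrow> coord_inner d (y v) (y v)"
      using inner_lim[OF that that] by simp
    then show ?thesis
      by (simp add: LIMSEQ_const_iff)
  qed
  moreover have "if strict then coord_inner d (y u) (y v) = - 1 / (T - 1)
      else coord_inner d (y u) (y v) \<le> - 1 / (T - 1)" if "u \<in> V" "v \<in> V" "E u v" for u v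
  proof (cases strict)
    case True
    then have "(\<lambda>k. coord_inner d (xx k u) (xx k v)) = (\<lambda>k. - 1 / (tt k - 1))"
      using xx that unfolding coord_vec_coloring_def by auto
    then have "(\<lambda>k. - 1 / (tt k - 1)) \<longlonglongrightarrow> coord_inner d (y u) (y v)"
      using inner_lim[OF that(1,2)] by simp
    with True show ?thesis
      using LIMSEQ_unique[OF bound_lim] by simp
  next
    case False
    then have "\<forall>k. coord_inner d (xx k u) (xx k v) \<le> - 1 / (tt k - 1)"
      using xx that unfolding coord_vec_coloring_def by auto
    then show ?thesis
      using False LIMSEQ_le[OF inner_lim[OF that(1,2)] bound_lim] by auto
  qed
  ultimately show ?thesis
    using T2 unfolding coord_vec_coloring_def by blast
qed

text \<open>Coordinates of unit vectors are bounded, so along a subsequence the colorings converge.\<close>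
lemma closed_coord_vec_coloring_thresholds:
  assumes fin: "finite V"
  shows "closed {t. \<exists>x. coord_vec_coloring strict V E t d x}"
proof (unfold closed_sequential_limits, intro allI impI, elim conjE)
  fix tt T assume tt: "\<forall>k. tt k \<in> {t. \<exists>x. coord_vec_coloring strict V E t d x}" and lim: "tt \<longlonglongrightarrow> T"
  have "\<exists>xx. \<forall>k. coord_vec_coloring strict V E (tt k) d (xx k)"
    using tt by (intro choice) auto
  then obtain xx where xx: "\<And>k. coord_vec_coloring strict V E (tt k) d (xx k)"
    by blast
  have "\<forall>j\<in>V \<times> {..<d}. \<forall>k. \<bar>case_prod (xx k) j\<bar> \<le> 1"
    using coord_vec_coloring_coord_bound[OF xx] by auto
  then obtain r where r: "strict_mono r" "\<forall>j\<in>V \<times> {..<d}. convergent (\<lambda>k. case_prod (xx (r k)) j)"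
    using finite_bounded_convergent_subseq[of "V \<times> {..<d}" "\<lambda>k. case_prod (xx k)"] fin by blast
  have x_lim: "(\<lambda>k. xx (r k) v i) \<longlonglongrightarrow> lim (\<lambda>k. xx (r k) v i)" if "v \<in> V" "i < d" for v i
    using r(2) that by (auto simp: convergent_LIMSEQ_iff)
  have t_lim: "(\<lambda>k. tt (r k)) \<longlonglongrightarrow> T"
    using LIMSEQ_subseq_LIMSEQ[OF lim r(1)] by (simp add: o_def)
  have "coord_vec_coloring strict V E T d (\<lambda>v i. lim (\<lambda>k. xx (r k) v i))"
    by (rule coord_vec_coloring_limit[where xx = "\<lambda>k. xx (r k)", OF xx t_lim x_lim])
  then show "T \<in> {t. \<exists>x. coord_vec_coloring strict V E t d x}"
    by blast
qed

lemma least_coord_vec_coloring_threshold: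
  assumes "simple_graph V E"
  shows "\<exists>x. coord_vec_coloring strict V E
    (LEAST t. t \<ge> 2 \<and> (\<exists>x. coord_vec_coloring strict V E t (card V) x)) (card V) x"
proof -
  define S where "S = {t. \<exists>x. coord_vec_coloring strict V E t (card V) x}"
  have fin: "finite V" and irrefl: "\<forall>v. \<not> E v v"
    using assms unfolding simple_graph_def by auto
  obtain t x where "coord_vec_coloring True V E t (card V + 2) x"
    using simplex_coord_vec_coloring[of V E] fin irrefl by blast
  then have "coord_vec_coloring strict V E t (card V + 2) x"
    unfolding coord_vec_coloring_def by (cases strict) auto
  then have "S \<noteq> {}"
    unfolding S_def using coord_vec_coloring_card_dim[OF fin] by blast
  moreover have S_ge_2: "\<forall>t\<in>S. t \<ge> 2"
    unfolding S_def coord_vec_coloring_def by blast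
  then have bdd: "bdd_below S"
    unfolding bdd_below_def by blast
  ultimately have "Inf S \<in> S"
    using closed_coord_vec_coloring_thresholds[OF fin] unfolding S_def by (intro closed_contains_Inf)
  moreover have "(LEAST t. t \<ge> 2 \<and> t \<in> S) = Inf S"
    using \<open>Inf S \<in> S\<close> S_ge_2 cInf_lower[OF _ bdd] by (intro Least_equality) auto
  ultimately show ?thesis
    unfolding S_def by simp
qed

lemma vec_coloring_iff_coord:
  "vec_coloring V E t d p \<longleftrightarrow>
     coord_vec_coloring False V E t d (\<lambda>v i. p v ! i) \<and> (\<forall>v\<in>V. length (p v) = d)"
  unfolding vec_coloring_def coord_vec_coloring_def coord_inner_def vinner_def by auto

lemma strict_vec_coloring_iff_coord:
  "strict_vec_coloring V E t d p \<longleftrightarrow>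
     coord_vec_coloring True V E t d (\<lambda>v i. p v ! i) \<and> (\<forall>v\<in>V. length (p v) = d)"
  unfolding strict_vec_coloring_def coord_vec_coloring_def coord_inner_def vinner_def by auto

lemma ex_list_coloring_iff_coord:
  assumes "finite V"
  shows "(\<exists>d p. coord_vec_coloring strict V E t d (\<lambda>v i. p v ! i) \<and> (\<forall>v\<in>V. length (p v) = d))
     \<longleftrightarrow> (\<exists>x. coord_vec_coloring strict V E t (card V) x)"
proof
  assume "\<exists>d p. coord_vec_coloring strict V E t d (\<lambda>v i. p v ! i) \<and> (\<forall>v\<in>V. length (p v) = d)"
  then show "\<exists>x. coord_vec_coloring strict V E t (card V) x"
    using coord_vec_coloring_card_dim[OF assms] by blast
next
  assume "\<exists>x. coord_vec_coloring strict V E t (card V) x"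
  then obtain x where x: "coord_vec_coloring strict V E t (card V) x" ..
  have "coord_inner (card V) (\<lambda>i. map (x u) [0..<card V] ! i) (\<lambda>i. map (x v) [0..<card V] ! i)
      = coord_inner (card V) (x u) (x v)" for u v
    unfolding coord_inner_def by (intro sum.cong) auto
  then have "coord_vec_coloring strict V E t (card V) (\<lambda>v i. map (x v) [0..<card V] ! i)"
    by (intro coord_vec_coloring_cong_inner[OF x]) simp
  then show "\<exists>d p. coord_vec_coloring strict V E t d (\<lambda>v i. p v ! i) \<and> (\<forall>v\<in>V. length (p v) = d)"
    by (intro exI[of _ "card V"] exI[of _ "\<lambda>v. map (x v) [0..<card V]"]) simp
qed

lemma optimal_vec_coloring_exists:
  assumes "simple_graph V E"
  shows "\<exists>d p. optimal_vec_coloring V E d p"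
proof -
  have "finite V"
    using assms unfolding simple_graph_def by blast
  then show ?thesis
    using least_coord_vec_coloring_threshold[OF assms, of False]
    unfolding optimal_vec_coloring_def chi_v_def vec_coloring_iff_coord
    by (simp only: ex_list_coloring_iff_coord)
qed

lemma optimal_strict_vec_coloring_exists:
  assumes "simple_graph V E"
  shows "\<exists>d p. optimal_strict_vec_coloring V E d p"
proof -
  have "finite V"
    using assms unfolding simple_graph_def by blast
  then show ?thesis
    using least_coord_vec_coloring_threshold[OF assms, of True]
    unfolding optimal_strict_vec_coloring_def chi_sv_def strict_vec_coloring_iff_coord
    by (simp only: ex_list_coloring_iff_coord)
qed

section \<open>Cores\<close>

lemma optimal_vec_coloring_comp_hom:
  "optimal_vec_coloring V E d p \<Longrightarrow> graph_hom V E V E f \<Longrightarrow> optimal_vec_coloring V E d (p \<circ> f)"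
  unfolding optimal_vec_coloring_def vec_coloring_def graph_hom_def by auto

lemma optimal_strict_vec_coloring_comp_hom:
  "optimal_strict_vec_coloring V E d p \<Longrightarrow> graph_hom V E V E f
     \<Longrightarrow> optimal_strict_vec_coloring V E d (p \<circ> f)"
  unfolding optimal_strict_vec_coloring_def strict_vec_coloring_def graph_hom_def by auto

lemma is_core_if_locally_injective_comp:
  assumes "simple_graph V E" "connected_graph V E"
    and "\<And>f. graph_hom V E V E f \<Longrightarrow> locally_injective V E (p \<circ> f)"
  shows "is_core V E"
proof (rule is_core_if_homs_locally_injective[OF assms(1,2)])
  fix f assume "graph_hom V E V E f"
  then have "locally_injective_map V E (p \<circ> f)"
    using assms(3) locally_injective_iff_map by blast
  then show "locally_injective_map V E f"
    by (rule locally_injective_map_compD)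
qed

lemma unit_vectors_eq_if_vinner_eq_1:
  assumes "length a = length b" "vinner a a = 1" "vinner b b = 1" "vinner a b = 1"
  shows "a = b"
proof -
  have "(\<Sum>i<length a. (a ! i - b ! i)\<^sup>2)
      = (\<Sum>i<length a. a ! i * a ! i - 2 * (a ! i * b ! i) + b ! i * b ! i)"
    by (intro sum.cong) (simp_all add: power2_eq_square algebra_simps)
  also have "\<dots> = vinner a a - 2 * vinner a b + vinner b b"
    using assms(1) unfolding vinner_def by (simp add: sum.distrib sum_subtractf sum_distrib_left)
  finally have "(\<Sum>i<length a. (a ! i - b ! i)\<^sup>2) = 0"
    using assms(2-4) by simp
  then have "\<forall>i<length a. (a ! i - b ! i)\<^sup>2 = 0"
    by (subst (asm) sum_nonneg_eq_0_iff) auto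
  with assms(1) show ?thesis
    by (intro nth_equalityI) auto
qed

lemma locally_injective_map_if_gram_preserved:
  assumes p: "vec_coloring V E t d p" and li: "locally_injective V E p"
    and f: "graph_hom V E V E f"
    and gram: "\<forall>u\<in>V. \<forall>v\<in>V. vinner (p (f u)) (p (f v)) = vinner (p u) (p v)"
  shows "locally_injective_map V E f"
  unfolding locally_injective_map_def
proof (intro ballI impI notI)
  fix w u v assume uv: "w \<in> V" "u \<in> V" "v \<in> V" "E w u" "E w v" "u \<noteq> v" "f u = f v"
  have "vinner (p u) (p v) = vinner (p (f u)) (p (f v))"
    using gram uv(2,3) by simp
  also have "\<dots> = vinner (p (f u)) (p (f u))"
    using uv by simp
  also have "\<dots> = 1"
    using p f uv unfolding vec_coloring_def graph_hom_def by blast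
  finally have "p u = p v"
    using p uv unfolding vec_coloring_def by (intro unit_vectors_eq_if_vinner_eq_1) auto
  with li uv show False
    unfolding locally_injective_def by blast
qed

lemma is_core_if_uniquely_vec_colorable:
  assumes "simple_graph V E" "connected_graph V E" and unique: "uniquely_vec_colorable V E"
    and p: "optimal_vec_coloring V E d p" and li: "locally_injective V E p"
  shows "is_core V E"
proof (rule is_core_if_homs_locally_injective[OF assms(1,2)])
  fix f assume f: "graph_hom V E V E f"
  have "\<forall>u\<in>V. \<forall>v\<in>V. vinner ((p \<circ> f) u) ((p \<circ> f) v) = vinner (p u) (p v)"
    using unique p optimal_vec_coloring_comp_hom[OF p f] unfolding uniquely_vec_colorable_def
    by metis
  then have "\<forall>u\<in>V. \<forall>v\<in>V. vinner (p (f u)) (p (f v)) = vinner (p u) (p v)"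
    by simp
  with p li f show "locally_injective_map V E f"
    unfolding optimal_vec_coloring_def by (intro locally_injective_map_if_gram_preserved)
qed

theorem theorem4p3:
  fixes V :: "'a set" and E :: "'a \<Rightarrow> 'a \<Rightarrow> bool"
  assumes "simple_graph V E" and "connected_graph V E"
  shows "((\<forall>d p. optimal_vec_coloring V E d p \<longrightarrow> locally_injective V E p) \<longrightarrow> is_core V E)
       \<and> ((\<forall>d p. optimal_strict_vec_coloring V E d p \<longrightarrow> locally_injective V E p) \<longrightarrow> is_core V E)
       \<and> ((uniquely_vec_colorable V E \<and>
            (\<exists>d p. optimal_vec_coloring V E d p \<and> locally_injective V E p)) \<longrightarrow> is_core V E)"
proof (intro conjI impI)
  assume "\<forall>d p. optimal_vec_coloring V E d p \<longrightarrow> locally_injective V E p"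
  moreover obtain d p where "optimal_vec_coloring V E d p"
    using optimal_vec_coloring_exists[OF assms(1)] by blast
  ultimately show "is_core V E"
    using optimal_vec_coloring_comp_hom by (intro is_core_if_locally_injective_comp[OF assms]) blast
next
  assume "\<forall>d p. optimal_strict_vec_coloring V E d p \<longrightarrow> locally_injective V E p"
  moreover obtain d p where "optimal_strict_vec_coloring V E d p"
    using optimal_strict_vec_coloring_exists[OF assms(1)] by blast
  ultimately show "is_core V E"
    using optimal_strict_vec_coloring_comp_hom
    by (intro is_core_if_locally_injective_comp[OF assms]) blast
next
  assume "uniquely_vec_colorable V E \<and> (\<exists>d p. optimal_vec_coloring V E d p \<and> locally_injective V E p)"
  then show "is_core V E"
    using is_core_if_uniquely_vec_colorable[OF assms] by blast
qed

end
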